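(* Let $(G_k)_{k\in\mathbb Z}$ be a gibonacci sequence, let $\lambda = G_1^2 - G_0G_2$, and let $F_k$ denote the Fibonacci numbers. For every positive integer $n$ and all integers $t$ and $m$, \begin{equation*} \begin{split} &220\sum_{j = 1}^n G_{j + t - 1} G_{j + t} G_{j + t + 1} G_{j + t + 2} G_{j + t + m}\\ &\quad = \left(F_{m + 2} + F_{m - 3}\right)\Big(-\left(G_{n + t + 3}^5 - G_{t + 3}^5\right) + 7\left(G_{n + t + 2}^5 - G_{t + 2}^5\right) + 47\left(G_{n + t + 1}^5 - G_{t + 1}^5\right)\\ &\qquad\qquad + 31\left(G_{n + t}^5 - G_t^5\right) - 9\left(G_{n + t - 1}^5 - G_{t - 1}^5\right) - \left(G_{n + t - 2}^5 - G_{t - 2}^5\right)\Big)\\ &\qquad - 44\lambda^2\left(F_{m + 2} + F_{m - 3}\right)\left(G_{n + t + 2} - G_{t + 2}\right) - 44F_{m + 2}\left(G_{t + 1}^5 - \lambda^2 G_{t + 1}\right) + 44F_{m + 2}\left(G_{n + t + 1}^5 - \lambda^2 G_{n + t + 1}\right) \end{split} \end{equation*} and \begin{equation*} \begin{split} &220\sum_{j = 1}^n (-1)^{j - 1}G_{j + t - 1} G_{j + t} G_{j + t + 1} G_{j + t + 2} G_{j + t + m}\\ &\quad = -\left(F_{m + 2} - F_{m - 3}\right)\Big(-\left((-1)^{n + 1}G_{n + t + 3}^5 + G_{t + 3}^5\right) + 9\left((-1)^{n + 1}G_{n + t + 2}^5 + G_{t + 2}^5\right)\\ &\qquad\qquad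 + 31\left((-1)^{n + 1}G_{n + t + 1}^5 + G_{t + 1}^5\right) - 47\left((-1)^{n + 1}G_{n + t}^5 + G_t^5\right)\\ &\qquad\qquad + 7\left((-1)^{n + 1}G_{n + t - 1}^5 + G_{t - 1}^5\right) + \left((-1)^{n + 1}G_{n + t - 2}^5 + G_{t - 2}^5\right)\Big)\\ &\qquad + 44\lambda^2\left(F_{m + 2} - F_{m - 3}\right)\left((-1)^{n + 1}G_{n + t - 1} + G_{t - 1}\right) + 44F_{m + 2}\left(G_{t + 1}^5 - \lambda^2 G_{t + 1}\right)\\ &\qquad + 44F_{m + 2}(-1)^{n + 1}\left(G_{n + t + 1}^5 - \lambda^2 G_{n + t + 1}\right). \end{split} \end{equation*}
   Context: A gibonacci sequence $(G_k)_{k\in\mathbb Z}$ is defined by arbitrary initial values $G_0=a$, $G_1=b$ (numbers, not both zero) and $G_k=G_{k-1}+G_{k-2}$ for all integers $k$. The Fibonacci numbers $F_k$ are the gibonacci sequence with $F_0=0$, $F_1=1$, extended to all integer indices by the same recurrence (so $F_{-k}=(-1)^{k+1}F_k$). *)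

theory Defs
  imports Complex_Main "HOL-Number_Theory.Fib"
begin

definition fibz :: "int \<Rightarrow> int" where
  "fibz k = (if 0 \<le> k then int (fib (nat k))
             else (-1) ^ (nat (-k) + 1) * int (fib (nat (-k))))"

definition gibonacci :: "(int \<Rightarrow> complex) \<Rightarrow> bool" where
  "gibonacci G \<longleftrightarrow> (G 0 \<noteq> 0 \<or> G 1 \<noteq> 0) \<and> (\<forall>k. G k = G (k - 1) + G (k - 2))"

end

theory Submission
  imports Defs
begin

text \<open>Both sums telescope. Let c = (G(s)^2 - G(s-1) G(s+1))^2; by Cassini's identity this
  does not depend on s, so c = \<lambda>^2. Then 220 times the summand for s = j + t equals P(s) - P(s-1),
  resp. Q(s) + Q(s-1), for explicit quintic expressions P, Q in the values of G near s. Expanding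
  every G(s+k) in the basis G(s-1), G(s) and every F(m+k) in the basis F(m-1), F(m), each of
  these two facts becomes a polynomial identity in four variables.\<close>

definition fib_recurrent :: "(int \<Rightarrow> 'a::plus) \<Rightarrow> bool" where
  "fib_recurrent f \<longleftrightarrow> (\<forall>k. f (k + 2) = f (k + 1) + f k)"

lemma fib_recurrent_eqI:
  fixes f g :: "int \<Rightarrow> 'a::ab_group_add"
  assumes "fib_recurrent f" "fib_recurrent g" "f 0 = g 0" "f 1 = g 1"
  shows "f k = g k"
proof -
  have "f k = g k \<and> f (k + 1) = g (k + 1)"
  proof (induction k rule: int_induct[where k = 0])
    case base
    show ?case using assms(3,4) by simp
  next
    case (step1 i)
    have "f (i + 2) = g (i + 2)"
      using step1 assms(1,2) unfolding fib_recurrent_def by simp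
    then show ?case using step1 by (simp add: add.assoc)
  next
    case (step2 i)
    have "f (i - 1 + 2) = f (i - 1 + 1) + f (i - 1)" "g (i - 1 + 2) = g (i - 1 + 1) + g (i - 1)"
      using assms(1,2) unfolding fib_recurrent_def by blast+
    then have "f (i + 1) = f i + f (i - 1)" "g (i + 1) = g i + g (i - 1)"
      by (simp_all add: algebra_simps)
    then have "f (i - 1) = f (i + 1) - f i" "g (i - 1) = g (i + 1) - g i"
      by simp_all
    then show ?case using step2 by simp
  qed
  then show ?thesis ..
qed

lemma gibonacci_fib_recurrent:
  assumes "gibonacci G"
  shows "fib_recurrent G"
  unfolding fib_recurrent_def
proof
  fix k
  have "G (k + 2) = G (k + 2 - 1) + G (k + 2 - 2)"
    using assms unfolding gibonacci_def by blast
  then show "G (k + 2) = G (k + 1) + G k"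
    by (simp add: add_diff_eq[symmetric])
qed

lemma fibz_neg: "fibz (- int j) = (-1)^(j + 1) * int (fib j)"
  by (cases j) (simp_all add: fibz_def del: of_nat_Suc)

lemma fibz_rec: "fibz (k + 2) = fibz (k + 1) + fibz k"
proof -
  consider (nonneg) j where "k = int j" | (minus_one) "k = -1" | (neg) j where "k = - int j - 2"
  proof -
    have "k = int (nat k) \<or> k = -1 \<or> k = - int (nat (- k - 2)) - 2" by arith
    then show thesis using that by blast
  qed
  then show ?thesis
  proof cases
    case nonneg
    then show ?thesis by (simp add: fibz_def nat_add_distrib)
  next
    case minus_one
    then show ?thesis by (simp add: fibz_def)
  next
    case neg
    then have idx: "k + 2 = - int j" "k + 1 = - int (Suc j)" "k = - int (Suc (Suc j))"
      by simp_all
    have "fibz (- int j) = fibz (- int (Suc j)) + fibz (- int (Suc (Suc j)))"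
      unfolding fibz_neg by (simp add: algebra_simps)
    then show ?thesis
      unfolding idx(1,2) unfolding idx(3) .
  qed
qed

lemma fib_recurrent_fibz: "fib_recurrent (\<lambda>k. of_int (fibz k) :: 'a::ring_1)"
  unfolding fib_recurrent_def by (simp add: fibz_rec)

lemma fib_recurrent_shift:
  assumes "fib_recurrent f"
  shows "fib_recurrent (\<lambda>k. f (s + k))"
  unfolding fib_recurrent_def
proof
  fix k
  show "f (s + (k + 2)) = f (s + (k + 1)) + f (s + k)"
    using assms unfolding fib_recurrent_def by (simp add: add.assoc [symmetric])
qed

lemma fib_recurrent_lincomb:
  fixes f g :: "int \<Rightarrow> 'a::comm_ring"
  assumes "fib_recurrent f" "fib_recurrent g"
  shows "fib_recurrent (\<lambda>k. a * f k + b * g k)"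
  using assms unfolding fib_recurrent_def by (simp add: algebra_simps)

lemma fib_recurrent_expand:
  fixes G :: "int \<Rightarrow> 'a::comm_ring_1"
  assumes rec: "fib_recurrent G"
  shows "G (s + k) = of_int (fibz k) * G (s - 1) + of_int (fibz (k + 1)) * G s"
proof (rule fib_recurrent_eqI[where f = "\<lambda>k. G (s + k)"])
  show "fib_recurrent (\<lambda>k. G (s + k))"
    using rec by (rule fib_recurrent_shift)
  show "fib_recurrent (\<lambda>k. of_int (fibz k) * G (s - 1) + of_int (fibz (k + 1)) * G s)"
    using fib_recurrent_lincomb[OF fib_recurrent_fibz fib_recurrent_shift[OF fib_recurrent_fibz, of 1],
        where a = "G (s - 1)" and b = "G s"]
    by (simp add: mult.commute add.commute)
  show "G (s + 0) = of_int (fibz 0) * G (s - 1) + of_int (fibz (0 + 1)) * G s"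
    by (simp add: fibz_def)
  have "G (s - 1 + 2) = G (s - 1 + 1) + G (s - 1)"
    using rec unfolding fib_recurrent_def by blast
  then show "G (s + 1) = of_int (fibz 1) * G (s - 1) + of_int (fibz (1 + 1)) * G s"
    by (simp add: fibz_def numeral_eq_Suc add.commute)
qed

lemma fib_recurrent_window:
  fixes G :: "int \<Rightarrow> 'a::comm_ring_1"
  assumes "fib_recurrent G"
  shows "G (s - 3) = 2 * G (s - 1) - G s" "G (s - 2) = G s - G (s - 1)"
    "G (s + 1) = G (s - 1) + G s" "G (s + 2) = G (s - 1) + 2 * G s"
    "G (s + 3) = 2 * G (s - 1) + 3 * G s"
  using fib_recurrent_expand[OF assms, of s "-3"] fib_recurrent_expand[OF assms, of s "-2"]
    fib_recurrent_expand[OF assms, of s 1] fib_recurrent_expand[OF assms, of s 2]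
    fib_recurrent_expand[OF assms, of s 3]
  by (simp_all add: fibz_def numeral_eq_Suc)

definition cassini :: "(int \<Rightarrow> 'a::comm_ring_1) \<Rightarrow> int \<Rightarrow> 'a" where
  "cassini G k = G (k + 1)^2 - G k * G (k + 2)"

lemma cassini_succ:
  assumes "fib_recurrent G"
  shows "cassini G (k + 1) = - cassini G k"
proof -
  have "G (k + 2) = G (k + 1) + G k" "G (k + 1 + 2) = G (k + 1 + 1) + G (k + 1)"
    using assms unfolding fib_recurrent_def by blast+
  then show ?thesis
    unfolding cassini_def by (simp add: add.assoc power2_eq_square algebra_simps)
qed

lemma cassini_square_eq:
  assumes "fib_recurrent G"
  shows "cassini G k ^ 2 = cassini G 0 ^ 2"
proof (induction k rule: int_induct[where k = 0])
  case (step2 i)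
  then show ?case using cassini_succ[OF assms, of "i - 1"] by simp
qed (simp_all add: cassini_succ[OF assms])

text \<open>The expressions P and Q of the proof idea, with \<lambda> written as cassini G 0. The right-hand
  sides of the theorem are P(n + t) - P(t) and (-1)^(n+1) Q(n + t) + Q(t).\<close>

definition gib_antidiff :: "(int \<Rightarrow> 'a::comm_ring_1) \<Rightarrow> int \<Rightarrow> int \<Rightarrow> 'a" where
  "gib_antidiff G m s =
     (of_int (fibz (m + 2)) + of_int (fibz (m - 3))) *
       (- (G (s + 3)^5) + 7 * G (s + 2)^5 + 47 * G (s + 1)^5 + 31 * G s ^ 5
        - 9 * G (s - 1)^5 - G (s - 2)^5 - 44 * cassini G 0 ^ 2 * G (s + 2))
     + 44 * of_int (fibz (m + 2)) * (G (s + 1)^5 - cassini G 0 ^ 2 * G (s + 1))"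

definition gib_alt_antidiff :: "(int \<Rightarrow> 'a::comm_ring_1) \<Rightarrow> int \<Rightarrow> int \<Rightarrow> 'a" where
  "gib_alt_antidiff G m s =
     - (of_int (fibz (m + 2)) - of_int (fibz (m - 3))) *
       (- (G (s + 3)^5) + 9 * G (s + 2)^5 + 31 * G (s + 1)^5 - 47 * G s ^ 5
        + 7 * G (s - 1)^5 + G (s - 2)^5 - 44 * cassini G 0 ^ 2 * G (s - 1))
     + 44 * of_int (fibz (m + 2)) * (G (s + 1)^5 - cassini G 0 ^ 2 * G (s + 1))"

lemma gib_antidiff_steps:
  fixes G :: "int \<Rightarrow> 'a::idom"
  assumes rec: "fib_recurrent G"
  shows "gib_antidiff G m s - gib_antidiff G m (s - 1)
           = 220 * (G (s - 1) * G s * G (s + 1) * G (s + 2) * G (s + m))"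
    and "gib_alt_antidiff G m s + gib_alt_antidiff G m (s - 1)
           = 220 * (G (s - 1) * G s * G (s + 1) * G (s + 2) * G (s + m))"
proof -
  define x y where "x = G (s - 1)" and "y = G s"
  define p q where "p = (of_int (fibz (m - 1)) :: 'a)" and "q = (of_int (fibz m) :: 'a)"
  have window: "G (s - 3) = 2 * x - y" "G (s - 2) = y - x" "G (s - 1) = x" "G s = y"
    "G (s + 1) = x + y" "G (s + 2) = x + 2 * y" "G (s + 3) = 2 * x + 3 * y"
    using fib_recurrent_window[OF rec, of s] unfolding x_def y_def by simp_all
  have coeffs: "G (s + m) = q * x + (p + q) * y"
    "of_int (fibz (m + 2)) = p + 2 * q" "of_int (fibz (m - 3)) = 2 * p - q"
    using fib_recurrent_expand[OF rec, of s m] fib_recurrent_window[OF fib_recurrent_fibz[where 'a = 'a], of m]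
    unfolding x_def y_def p_def q_def by simp_all
  have idx: "s - 1 + 3 = s + 2" "s - 1 + 2 = s + 1" "s - 1 + 1 = s"
    "s - 1 - 1 = s - 2" "s - 1 - 2 = s - 3" by simp_all
  have lam: "cassini G 0 ^ 2 = (y ^ 2 - x * (x + y)) ^ 2"
    using cassini_square_eq[OF rec, of "s - 1"] by (simp add: cassini_def idx window)
  note substitutions = idx window coeffs lam
  show "gib_antidiff G m s - gib_antidiff G m (s - 1)
          = 220 * (G (s - 1) * G s * G (s + 1) * G (s + 2) * G (s + m))"
    unfolding gib_antidiff_def substitutions by algebra
  show "gib_alt_antidiff G m s + gib_alt_antidiff G m (s - 1)
          = 220 * (G (s - 1) * G s * G (s + 1) * G (s + 2) * G (s + m))"
    unfolding gib_alt_antidiff_def substitutions by algebra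
qed

lemma sum_int_telescope:
  fixes f :: "int \<Rightarrow> 'a::ab_group_add"
  shows "(\<Sum>j=1..n. f (int j + t) - f (int j + t - 1)) = f (int n + t) - f t"
proof (induction n)
  case (Suc n)
  then show ?case by (simp add: add.commute add.left_commute)
qed simp

lemma sum_int_alternating_telescope:
  fixes f :: "int \<Rightarrow> 'a::comm_ring_1"
  shows "(\<Sum>j=1..n. (-1)^(j - 1) * (f (int j + t) + f (int j + t - 1)))
           = (-1)^(n + 1) * f (int n + t) + f t"
proof (induction n)
  case (Suc n)
  have "int (Suc n) + t - 1 = int n + t" by simp
  with Suc show ?case by (simp add: algebra_simps)
qed simp

theorem theorem1:
  fixes G :: "int \<Rightarrow> complex" and n :: nat and t m :: int
  assumes "gibonacci G" and "n \<ge> 1"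
  defines "lam \<equiv> (G 1)^2 - G 0 * G 2"
  defines "F \<equiv> (\<lambda>k. of_int (fibz k) :: complex)"
  defines "N \<equiv> int n"
  shows
  "(220 * (\<Sum>j=1..n. G (int j + t - 1) * G (int j + t) * G (int j + t + 1) * G (int j + t + 2) * G (int j + t + m))
    = (F (m + 2) + F (m - 3)) *
        ( - (G (N + t + 3)^5 - G (t + 3)^5) + 7 * (G (N + t + 2)^5 - G (t + 2)^5)
          + 47 * (G (N + t + 1)^5 - G (t + 1)^5) + 31 * (G (N + t)^5 - G t ^5)
          - 9 * (G (N + t - 1)^5 - G (t - 1)^5) - (G (N + t - 2)^5 - G (t - 2)^5))
      - 44 * lam^2 * (F (m + 2) + F (m - 3)) * (G (N + t + 2) - G (t + 2))
      - 44 * F (m + 2) * (G (t + 1)^5 - lam^2 * G (t + 1))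
      + 44 * F (m + 2) * (G (N + t + 1)^5 - lam^2 * G (N + t + 1)))
   \<and>
   (220 * (\<Sum>j=1..n. (-1)^(j - 1) * G (int j + t - 1) * G (int j + t) * G (int j + t + 1) * G (int j + t + 2) * G (int j + t + m))
    = - (F (m + 2) - F (m - 3)) *
        ( - ((-1)^(n + 1) * G (N + t + 3)^5 + G (t + 3)^5)
          + 9 * ((-1)^(n + 1) * G (N + t + 2)^5 + G (t + 2)^5)
          + 31 * ((-1)^(n + 1) * G (N + t + 1)^5 + G (t + 1)^5)
          - 47 * ((-1)^(n + 1) * G (N + t)^5 + G t ^5)
          + 7 * ((-1)^(n + 1) * G (N + t - 1)^5 + G (t - 1)^5)
          + ((-1)^(n + 1) * G (N + t - 2)^5 + G (t - 2)^5))
      + 44 * lam^2 * (F (m + 2) - F (m - 3)) * ((-1)^(n + 1) * G (N + t - 1) + G (t - 1))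
      + 44 * F (m + 2) * (G (t + 1)^5 - lam^2 * G (t + 1))
      + 44 * F (m + 2) * (-1)^(n + 1) * (G (N + t + 1)^5 - lam^2 * G (N + t + 1)))"
proof -
  have rec: "fib_recurrent G"
    using assms(1) by (rule gibonacci_fib_recurrent)
  have lam: "lam = cassini G 0"
    unfolding lam_def cassini_def by simp
  have sum: "220 * (\<Sum>j=1..n. G (int j + t - 1) * G (int j + t) * G (int j + t + 1) * G (int j + t + 2) * G (int j + t + m))
      = gib_antidiff G m (N + t) - gib_antidiff G m t"
    unfolding N_def sum_int_telescope[of "gib_antidiff G m", symmetric]
    by (simp add: sum_distrib_left gib_antidiff_steps(1)[OF rec])
  have alt_sum: "220 * (\<Sum>j=1..n. (-1)^(j - 1) * G (int j + t - 1) * G (int j + t) * G (int j + t + 1) * G (int j + t + 2) * G (int j + t + m))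
      = (-1)^(n + 1) * gib_alt_antidiff G m (N + t) + gib_alt_antidiff G m t"
    unfolding N_def sum_int_alternating_telescope[of "gib_alt_antidiff G m", symmetric]
    by (simp add: sum_distrib_left gib_antidiff_steps(2)[OF rec] mult_ac)
  show ?thesis
    unfolding sum alt_sum gib_antidiff_def gib_alt_antidiff_def lam F_def
    by (intro conjI) algebra+
qed

end
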